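(* Let $n \geq 3$ and let $S$ be a $4$-cap free, $n$-cup free configuration of size at least $\binom{n-1}{2}+1$, with a fixed slope labeling. For each $1 \le i \le n-1$ let $R_i(S) = \{p\in S : \beta(p)=i\}$. Then $R_i(S)$ is nonempty for every $1 \leq i \leq n-1$.
   Context: A configuration is a finite set $S$ of points with a linear order $<$ and, for every $3$-element subset, an arbitrary assignment declaring it either a cap or a cup. Points $x_1<\cdots<x_a$ form an $a$-cup (resp. $a$-cap) if every consecutive triple $\{x_{i-1},x_i,x_{i+1}\}$, $1<i<a$, is assigned cup (resp. cap); $1$- and $2$-element sets are both caps and cups. The length of a cup is its number of points; a cup $x_1\cdots x_a$ ends with $x_a$. An edge is a pair $x<y$, written $xy$. A slope labeling of a $4$-cap free configuration is an assignment $s(xy)\in\{1,2\}$ to every edge such that for any $x<y<z$, $s(xy)\le s(yz)$ implies $\{x,y,z\}$ is a $3$-cup. For $p \in S$, $\beta(p)$ denotes the maximum length of a cup that ends with $p$. *)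

theory Defs
  imports Main
begin

text \<open>A configuration: a finite set S in a linearly ordered type, together with a
predicate cup; for x < y < z the triple {x,y,z} is a cup iff cup x y z, and a cap
otherwise (every triple is exactly one of the two).\<close>

definition is_cup :: "('a::linorder \<Rightarrow> 'a \<Rightarrow> 'a \<Rightarrow> bool) \<Rightarrow> 'a set \<Rightarrow> 'a list \<Rightarrow> bool" where
  "is_cup cup S xs \<longleftrightarrow> sorted_wrt (<) xs \<and> set xs \<subseteq> S \<and>
     (\<forall>i. 0 < i \<and> i + 1 < length xs \<longrightarrow> cup (xs ! (i - 1)) (xs ! i) (xs ! (i + 1)))"

definition is_cap :: "('a::linorder \<Rightarrow> 'a \<Rightarrow> 'a \<Rightarrow> bool) \<Rightarrow> 'a set \<Rightarrow> 'a list \<Rightarrow> bool" where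
  "is_cap cup S xs \<longleftrightarrow> sorted_wrt (<) xs \<and> set xs \<subseteq> S \<and>
     (\<forall>i. 0 < i \<and> i + 1 < length xs \<longrightarrow> \<not> cup (xs ! (i - 1)) (xs ! i) (xs ! (i + 1)))"

definition cap_free :: "nat \<Rightarrow> ('a::linorder \<Rightarrow> 'a \<Rightarrow> 'a \<Rightarrow> bool) \<Rightarrow> 'a set \<Rightarrow> bool" where
  "cap_free a cup S \<longleftrightarrow> \<not> (\<exists>xs. is_cap cup S xs \<and> length xs = a)"

definition cup_free :: "nat \<Rightarrow> ('a::linorder \<Rightarrow> 'a \<Rightarrow> 'a \<Rightarrow> bool) \<Rightarrow> 'a set \<Rightarrow> bool" where
  "cup_free a cup S \<longleftrightarrow> \<not> (\<exists>xs. is_cup cup S xs \<and> length xs = a)"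

definition slope_labeling :: "('a::linorder \<Rightarrow> 'a \<Rightarrow> 'a \<Rightarrow> bool) \<Rightarrow> 'a set \<Rightarrow> ('a \<Rightarrow> 'a \<Rightarrow> nat) \<Rightarrow> bool" where
  "slope_labeling cup S s \<longleftrightarrow>
     (\<forall>x\<in>S. \<forall>y\<in>S. x < y \<longrightarrow> s x y \<in> {1, 2}) \<and>
     (\<forall>x\<in>S. \<forall>y\<in>S. \<forall>z\<in>S. x < y \<and> y < z \<and> s x y \<le> s y z \<longrightarrow> cup x y z)"

definition beta :: "('a::linorder \<Rightarrow> 'a \<Rightarrow> 'a \<Rightarrow> bool) \<Rightarrow> 'a set \<Rightarrow> 'a \<Rightarrow> nat" where
  "beta cup S p = Max {length xs | xs. is_cup cup S xs \<and> xs \<noteq> [] \<and> last xs = p}"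

end

theory Submission
  imports Defs
begin

text \<open>Two points \<open>x < y\<close> with the same \<open>\<beta>\<close> are joined by an edge of slope 1: if
\<open>s(xy) = 2\<close>, then for the last edge \<open>wx\<close> of a longest cup ending at \<open>x\<close> we get
\<open>s(wx) \<le> s(xy)\<close>, so appending \<open>y\<close> gives a longer cup ending at \<open>y\<close>. Consecutive slopes 1
force cups, so each level \<open>R\<^sub>i\<close> is itself a cup ending at a point with \<open>\<beta> = i\<close>, whence
\<open>|R\<^sub>i| \<le> i\<close>. As \<open>\<beta> < n\<close> on an \<open>n\<close>-cup free set, if no point had \<open>\<beta> = n - 1\<close> then
\<open>|S| \<le> 1 + \<dots> + (n - 2) = (n - 1 choose 2)\<close>. Finally the levels are downward closed: the leftmost
point with \<open>\<beta> \<ge> i\<close> has \<open>\<beta> = i\<close>, since otherwise the \<open>i\<close>-th point of a longest cup ending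
at it would lie further left.\<close>

lemma is_cup_length_le_card:
  assumes "finite S" "is_cup cup S xs"
  shows "length xs \<le> card S"
proof -
  have "distinct xs" "set xs \<subseteq> S"
    using assms(2) by (auto simp: is_cup_def strict_sorted_iff)
  then show ?thesis
    using assms(1) by (metis card_mono distinct_card)
qed

lemma is_cup_take: "is_cup cup S xs \<Longrightarrow> is_cup cup S (take k xs)"
  unfolding is_cup_def by (auto simp: sorted_wrt_take dest: in_set_takeD)

lemma is_cup_singleton: "p \<in> S \<Longrightarrow> is_cup cup S [p]"
  by (simp add: is_cup_def)

lemma is_cup_pair: "x \<in> S \<Longrightarrow> y \<in> S \<Longrightarrow> x < y \<Longrightarrow> is_cup cup S [x, y]"
  by (simp add: is_cup_def)

lemma is_cup_snoc:
  assumes "is_cup cup S (ys @ [w, x])" "y \<in> S" "x < y" "cup w x y"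
  shows "is_cup cup S (ys @ [w, x, y])"
proof -
  have "\<forall>a\<in>set (ys @ [w, x]). a < y"
    using assms(1,3) by (auto simp: is_cup_def sorted_wrt_append)
  moreover have "cup ((ys @ [w, x, y]) ! (i - 1)) ((ys @ [w, x, y]) ! i) ((ys @ [w, x, y]) ! (i + 1))"
    if "0 < i" "i + 1 < length ys + 3" for i
  proof (cases "i = length ys + 1")
    case True
    then show ?thesis using assms(4) by (simp add: nth_append)
  next
    case False
    then have "i + 1 < length (ys @ [w, x])" using that by simp
    then show ?thesis
      using assms(1) that(1) unfolding is_cup_def
      by (metis append.assoc append_Cons append_Nil less_imp_diff_less add_lessD1 nth_append_left)
  qed
  ultimately show ?thesis
    using assms(1,2) by (auto simp: is_cup_def sorted_wrt_append)
qed

lemma is_cup_sorted_list_of_set: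
  assumes "finite R" "R \<subseteq> S"
    and cups: "\<And>a b c. a \<in> R \<Longrightarrow> b \<in> R \<Longrightarrow> c \<in> R \<Longrightarrow> a < b \<Longrightarrow> b < c \<Longrightarrow> cup a b c"
  shows "is_cup cup S (sorted_list_of_set R)"
proof -
  let ?L = "sorted_list_of_set R"
  have sorted: "sorted_wrt (<) ?L" and set_L: "set ?L = R"
    using assms(1) by simp_all
  have in_R: "?L ! j \<in> R" if "j < length ?L" for j
    using that set_L nth_mem by blast
  have "cup (?L ! (k - 1)) (?L ! k) (?L ! (k + 1))" if "0 < k" "k + 1 < length ?L" for k
  proof (rule cups)
    show "?L ! (k - 1) \<in> R" "?L ! k \<in> R" "?L ! (k + 1) \<in> R"
      using that by (simp_all add: in_R)
    show "?L ! (k - 1) < ?L ! k" "?L ! k < ?L ! (k + 1)"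
      using that sorted_wrt_nth_less[OF sorted] by simp_all
  qed
  then show ?thesis
    using sorted set_L assms(2) by (simp add: is_cup_def)
qed

lemma list_obtain_last_two:
  assumes "2 \<le> length xs"
  obtains ys w where "xs = ys @ [w, last xs]"
proof (cases xs rule: rev_exhaust)
  case (snoc zs x)
  then show ?thesis using assms that by (cases zs rule: rev_exhaust) auto
qed (use assms in simp)

lemma finite_cup_lengths:
  assumes "finite S"
  shows "finite {length xs | xs. is_cup cup S xs \<and> xs \<noteq> [] \<and> last xs = p}"
proof (rule finite_subset)
  show "{length xs | xs. is_cup cup S xs \<and> xs \<noteq> [] \<and> last xs = p} \<subseteq> {..card S}"
    using is_cup_length_le_card[OF assms] by fastforce
qed simp

lemma beta_ge_length:
  assumes "finite S" "is_cup cup S xs" "xs \<noteq> []"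
  shows "length xs \<le> beta cup S (last xs)"
  unfolding beta_def using assms by (intro Max_ge finite_cup_lengths) auto

lemma beta_attained:
  assumes "finite S" "p \<in> S"
  obtains xs where "is_cup cup S xs" "xs \<noteq> []" "last xs = p" "length xs = beta cup S p"
proof -
  have "length [p] \<in> {length xs | xs. is_cup cup S xs \<and> xs \<noteq> [] \<and> last xs = p}"
    using is_cup_singleton[OF assms(2)] by fastforce
  then have "beta cup S p \<in> {length xs | xs. is_cup cup S xs \<and> xs \<noteq> [] \<and> last xs = p}"
    unfolding beta_def by (intro Max_in finite_cup_lengths assms(1)) auto
  then show ?thesis using that by auto
qed

lemma beta_less_if_cup_free:
  assumes "finite S" "cup_free n cup S" "p \<in> S"
  shows "beta cup S p < n"
proof (rule ccontr)
  assume "\<not> beta cup S p < n"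
  obtain xs where "is_cup cup S xs" "length xs = beta cup S p"
    using beta_attained[OF assms(1,3)] by metis
  then have "is_cup cup S (take n xs)" "length (take n xs) = n"
    using \<open>\<not> beta cup S p < n\<close> by (auto simp: is_cup_take)
  then show False using assms(2) unfolding cup_free_def by blast
qed

lemma slope_eq_1_if_beta_eq:
  assumes "finite S" "slope_labeling cup S s" "x \<in> S" "y \<in> S" "x < y"
    and beta_eq: "beta cup S x = beta cup S y"
  shows "s x y = 1"
proof -
  obtain xs where xs: "is_cup cup S xs" "xs \<noteq> []" "last xs = x" "length xs = beta cup S x"
    using beta_attained[OF assms(1,3)] .
  show ?thesis
  proof (cases "2 \<le> length xs")
    case False
    have "length [x, y] \<le> beta cup S y"
      using beta_ge_length[OF assms(1) is_cup_pair[OF assms(3-5)]] by simp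
    then show ?thesis using False xs(2,4) beta_eq by simp
  next
    case True
    then obtain ys w where xs_eq: "xs = ys @ [w, x]"
      using xs(3) by (metis list_obtain_last_two)
    then have "w \<in> S" "w < x"
      using xs(1) by (auto simp: is_cup_def sorted_wrt_append)
    have "\<not> cup w x y"
    proof
      assume "cup w x y"
      then have "is_cup cup S (ys @ [w, x, y])"
        using is_cup_snoc xs(1) xs_eq assms(4,5) by metis
      from beta_ge_length[OF assms(1) this] show False
        using xs_eq xs(4) beta_eq by simp
    qed
    then have "\<not> s w x \<le> s x y" "s w x \<in> {1, 2}" "s x y \<in> {1, 2}"
      using assms(2-5) \<open>w \<in> S\<close> \<open>w < x\<close> unfolding slope_labeling_def by blast+
    then show ?thesis by auto
  qed
qed

definition beta_level :: "('a::linorder \<Rightarrow> 'a \<Rightarrow> 'a \<Rightarrow> bool) \<Rightarrow> 'a set \<Rightarrow> nat \<Rightarrow> 'a set" where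
  "beta_level cup S i = {p \<in> S. beta cup S p = i}"

lemma card_beta_level_le:
  assumes "finite S" "slope_labeling cup S s"
  shows "card (beta_level cup S i) \<le> i"
proof (cases "beta_level cup S i = {}")
  case False
  define L where "L = sorted_list_of_set (beta_level cup S i)"
  have set_L: "set L = beta_level cup S i"
    unfolding L_def beta_level_def using assms(1) by simp
  have "is_cup cup S L"
    unfolding L_def
  proof (rule is_cup_sorted_list_of_set)
    fix a b c assume "a \<in> beta_level cup S i" "b \<in> beta_level cup S i"
      "c \<in> beta_level cup S i" "a < b" "b < c"
    then show "cup a b c"
      using slope_eq_1_if_beta_eq[OF assms] assms(2)
      unfolding beta_level_def slope_labeling_def by force
  qed (use assms(1) in \<open>auto simp: beta_level_def\<close>)
  moreover have "L \<noteq> []" using False set_L by auto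
  ultimately have "length L \<le> beta cup S (last L)"
    using beta_ge_length[OF assms(1)] by blast
  also have "\<dots> = i"
    using \<open>L \<noteq> []\<close> set_L last_in_set unfolding beta_level_def by fastforce
  finally show ?thesis unfolding L_def by simp
qed (metis card.empty zero_le)

lemma beta_level_top_nonempty:
  assumes "finite S" "cup_free n cup S" "slope_labeling cup S s"
    and "card S > (n - 1) choose 2"
  shows "beta_level cup S (n - 1) \<noteq> {}"
proof
  assume no_top: "beta_level cup S (n - 1) = {}"
  have "S \<subseteq> (\<Union>i\<le>n - 2. beta_level cup S i)"
    using beta_less_if_cup_free[OF assms(1,2)] no_top unfolding beta_level_def by fastforce
  then have "card S \<le> card (\<Union>i\<le>n - 2. beta_level cup S i)"
    using assms(1) by (intro card_mono) (auto simp: beta_level_def)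
  also have "\<dots> \<le> (\<Sum>i\<le>n - 2. card (beta_level cup S i))"
    by (rule card_UN_le) simp
  also have "\<dots> \<le> (\<Sum>i\<le>n - 2. i choose 1)"
    using card_beta_level_le[OF assms(1,3)] by (intro sum_mono) simp
  also have "\<dots> = Suc (n - 2) choose 2"
    by (simp only: sum_choose_upper Suc_1)
  also have "\<dots> = (n - 1) choose 2"
    by (cases "n \<le> 1") (simp_all add: Suc_diff_Suc numeral_2_eq_2)
  finally show False using assms(4) by simp
qed

lemma beta_level_nonempty_below:
  assumes "finite S" "q \<in> S" "1 \<le> i" "i \<le> beta cup S q"
  shows "beta_level cup S i \<noteq> {}"
proof -
  define T where "T = {p \<in> S. i \<le> beta cup S p}"
  have "finite T" "T \<noteq> {}" using assms unfolding T_def by auto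
  define y where "y = Min T"
  have "y \<in> T" unfolding y_def using \<open>finite T\<close> \<open>T \<noteq> {}\<close> by (rule Min_in)
  then have "y \<in> S" "i \<le> beta cup S y" unfolding T_def by auto
  have y_min: "y \<le> z" if "z \<in> T" for z
    unfolding y_def using \<open>finite T\<close> that by (rule Min_le)
  obtain xs where xs: "is_cup cup S xs" "xs \<noteq> []" "last xs = y" "length xs = beta cup S y"
    using beta_attained[OF assms(1) \<open>y \<in> S\<close>] .
  have "beta cup S y = i"
  proof (rule ccontr)
    assume "beta cup S y \<noteq> i"
    then have "i < length xs" using \<open>i \<le> beta cup S y\<close> xs(4) by simp
    define d where "d = xs ! (i - 1)"
    have "take i xs \<noteq> []" using assms(3) xs(2) by simp
    moreover have "last (take i xs) = d"
      unfolding d_def using assms(3) \<open>i < length xs\<close> by (subst last_conv_nth) auto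
    ultimately have "length (take i xs) \<le> beta cup S d"
      using beta_ge_length[OF assms(1) is_cup_take[OF xs(1)]] by metis
    then have "i \<le> beta cup S d" using \<open>i < length xs\<close> by simp
    moreover have "d \<in> S"
      using xs(1) \<open>i < length xs\<close> unfolding d_def is_cup_def by auto
    moreover have "d < y"
    proof -
      have "sorted_wrt (<) xs" using xs(1) by (simp add: is_cup_def)
      moreover have "y = xs ! (length xs - 1)" using xs(2,3) by (simp add: last_conv_nth)
      ultimately show ?thesis
        unfolding d_def using \<open>i < length xs\<close> assms(3) by (simp add: sorted_wrt_nth_less)
    qed
    ultimately show False using y_min[of d] unfolding T_def by auto
  qed
  then show ?thesis using \<open>y \<in> S\<close> unfolding beta_level_def by blast
qed

theorem lemma5p9:
  fixes S :: "'a::linorder set" and cup :: "'a \<Rightarrow> 'a \<Rightarrow> 'a \<Rightarrow> bool"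
    and s :: "'a \<Rightarrow> 'a \<Rightarrow> nat" and n :: nat
  assumes "n \<ge> 3"
    and "finite S"
    and "cap_free 4 cup S"
    and "cup_free n cup S"
    and "card S \<ge> ((n - 1) choose 2) + 1"
    and "slope_labeling cup S s"
  shows "\<forall>i \<in> {1..n-1}. {p \<in> S. beta cup S p = i} \<noteq> {}"
proof
  fix i assume "i \<in> {1..n-1}"
  obtain q where "q \<in> S" "beta cup S q = n - 1"
    using beta_level_top_nonempty[OF assms(2,4,6)] assms(5) unfolding beta_level_def by force
  then show "{p \<in> S. beta cup S p = i} \<noteq> {}"
    using beta_level_nonempty_below[OF assms(2)] \<open>i \<in> {1..n-1}\<close> unfolding beta_level_def by simp
qed

end
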